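(* Let $(\mathcal W,\rhd)$ be a $\lambda$A-frame and $\eta$ a hereditary type environment. If $\gamma\vdash A\preceq B$ is derivable and $\eta(X)_p\subseteq\eta(Y)_p$ for every $p\in\mathcal W$ and every pair $X\preceq Y$ in $\gamma$, then $\mathcal I[A]^\eta_p\subseteq\mathcal I[B]^\eta_p$ for every $p\in\mathcal W$.
   Context: Type expressions: fix a countably infinite set of type variables $X,Y,Z,\dots$. Pseudo type expressions are generated by $A::=X\mid A\to A\mid \bullet A\mid \mu X.A$ ($\mu$ binds $X$; $\alpha$-convertible expressions are identified; $\to$ associates to the right; $\bullet$ binds tighter than $\to$, which binds tighter than $\mu$). $A[B/X]$ denotes capture-avoiding substitution. $\top$ abbreviates $\mu X.\bullet X$, and $\bullet^n A$ denotes $A$ prefixed by $n$ copies of $\bullet$. The tail $t(A)$ is defined by $t(X)=X$, $t(A\to B)=t(B)$, $t(\bullet A)=\bullet t(A)$, $t(\mu X.A)=\mu X.t(A)$; it always has the form $\bullet^{m_0}\mu X_1.\bullet^{m_1}\mu X_2.\cdots\mu X_n.\bullet^{m_n}Y$. $A$ is a $\top$-variant iff $Y=X_i$ for some $1\le i\le n$ with $X_i\notin\{X_{i+1},\dots,X_n\}$ and $m_i+\dots+m_n\ge 1$. $A$ is proper in $X$ iff: a variable $Y$ is proper in $X$ iff $Y\neq X$; $\bullet A$ is always proper in $X$; $A\to B$ is proper in $X$ iff both $A,B$ are proper in $X$ or $B$ is a $\top$-variant; for $Y\ne X$, $\mu Y.A$ is proper in $X$ iff $A$ is proper in $X$ or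 $\mu Y.A$ is a $\top$-variant. Type expressions are the least set of pseudo type expressions containing all type variables, closed under $\to$ and $\bullet$, and containing $\mu X.A$ whenever it contains $A$ and $A$ is proper in $X$. Equality: $\cong$ is the least relation on type expressions such that: $A\cong A$; $A\cong B$ implies $B\cong A$; $A\cong B$ and $B\cong C$ imply $A\cong C$; $A\cong B$ implies $\bullet A\cong\bullet B$; $A\cong C$ and $B\cong D$ imply $A\to B\cong C\to D$; $A\to\top\cong\top$; $\mu X.A\cong A[\mu X.A/X]$; and if $A\cong C[A/X]$ with $C$ proper in $X$, then $A\cong\mu X.C$. $\simeq$ is the least relation satisfying the same closure conditions and additionally $\bullet(A\to B)\simeq\bullet A\to\bullet B$. Subtyping: a subtyping assumption $\gamma$ is a finite set of pairs $X\preceq Y$ of type variables in which each type variable occurs at most once; $FTV(\gamma)$ is the set of variables occurring in it. Judgments $\gamma\vdash A\preceq B$ are derived by the rules: $\gamma\cup\{X\preceq Y\}\vdash X\preceq Y$; $\gamma\vdash A\preceq\top$; from $A\simeq B$ infer $\gamma\vdash A\preceq B$; from $\gamma_1\vdash A\preceq B$ and $\gamma_2\vdash B\preceq C$ infer $\gamma_1\cup\gamma_2\vdash A\preceq C$; from $\gamma\vdash A\preceq B$ infer $\gamma\vdash\bullet A\preceq\bullet B$; from $\gamma_1\vdash A'\preceq A$ and $\gamma_2\vdash B\preceq B'$ infer $\gamma_1\cup\gamma_2\vdash A\to B\preceq A'\to B'$; from $\gamma\cup\{X\preceq Y\}\vdash A\preceq B$ infer $\gamma\vdash\mu X.A\preceq\mu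 Y.B$, provided $X\notin FTV(\gamma)\cup FTV(B)$, $Y\notin FTV(\gamma)\cup FTV(A)$, $A$ is proper in $X$ and $B$ is proper in $Y$; and $\gamma\vdash A\preceq\bullet A$. All sets $\gamma\cup\{X\preceq Y\}$, $\gamma_1\cup\gamma_2$ must be well-formed subtyping assumptions. $A\preceq B$ means $\{\}\vdash A\preceq B$ is derivable. Semantics: a syntactical $\lambda$-algebra $(\mathcal V,\cdot,[\![-]\!])$ consists of a nonempty set $\mathcal V$, a map $\cdot:\mathcal V\times\mathcal V\to\mathcal V$, and values $[\![M]\!]_\rho\in\mathcal V$ for untyped $\lambda$-terms $M$ and maps $\rho$ from individual variables to $\mathcal V$, such that $[\![x]\!]_\rho=\rho(x)$, $[\![MN]\!]_\rho=[\![M]\!]_\rho\cdot[\![N]\!]_\rho$, $[\![\lambda x.M]\!]_\rho\cdot v=[\![M]\!]_{\rho[v/x]}$, $[\![M]\!]_\rho$ depends only on $\rho$ restricted to free variables of $M$, and $M=_\beta N$ implies $[\![M]\!]_\rho=[\![N]\!]_\rho$; fix one. A well-founded frame is a pair $(\mathcal W,\rhd)$ with $\mathcal W$ nonempty and $\rhd$ a binary relation on $\mathcal W$ admitting no infinite chain $p_0\rhd p_1\rhd p_2\rhd\cdots$; $\trianglerighteq$ denotes the reflexive-transitive closure of $\rhd$. $\rhd$ is locally linear if whenever $p\rhd q$ there is $r$ with $p\trianglerighteq r\rhd q$ such that $r\rhd s$ implies $q\trianglerighteq s$ for all $s$. A $\lambda$A-frame is a well-founded frame whose $\rhd$ is locally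 linear. A type environment $\eta$ assigns a set $\eta(X)_p\subseteq\mathcal V$ to each type variable $X$ and world $p$; it is hereditary if $p\rhd q$ implies $\eta(X)_p\subseteq\eta(X)_q$. For hereditary $\eta$, $\mathcal I[A]^\eta_p\subseteq\mathcal V$ is defined (by well-founded induction on $p$ and the syntactic rank of $A$) by: $\mathcal I[A]^\eta_p=\mathcal V$ if $A$ is a $\top$-variant; otherwise $\mathcal I[X]^\eta_p=\eta(X)_p$; $\mathcal I[\bullet A]^\eta_p=\{u\mid u\in\mathcal I[A]^\eta_q\text{ for all }q\text{ with }p\rhd q\}$; $\mathcal I[A\to B]^\eta_p=\{u\mid \text{for all }q\text{ with }p\trianglerighteq q\text{ and all }v\in\mathcal I[A]^\eta_q,\ u\cdot v\in\mathcal I[B]^\eta_q\}$; $\mathcal I[\mu X.A]^\eta_p=\mathcal I[A[\mu X.A/X]]^\eta_p$. *)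

theory Defs
  imports Main
begin

text \<open>Free type variables are named by natural numbers (FV); variables bound by mu
are de Bruijn indices (BV). Alpha-convertible expressions are thus identified.\<close>

datatype ty = FV nat | BV nat | Arr ty ty | Lat ty | Mu ty

text \<open>Opening: replace the bound index k by u (A[u/X] for the variable bound by mu).\<close>
fun opn :: "nat \<Rightarrow> ty \<Rightarrow> ty \<Rightarrow> ty" where
  "opn k u (FV X) = FV X"
| "opn k u (BV i) = (if i = k then u else BV i)"
| "opn k u (Arr A B) = Arr (opn k u A) (opn k u B)"
| "opn k u (Lat A) = Lat (opn k u A)"
| "opn k u (Mu A) = Mu (opn (Suc k) u A)"

fun fvs :: "ty \<Rightarrow> nat set" where
  "fvs (FV X) = {X}"
| "fvs (BV i) = {}"
| "fvs (Arr A B) = fvs A \<union> fvs B"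
| "fvs (Lat A) = fvs A"
| "fvs (Mu A) = fvs A"

text \<open>Capture-avoiding substitution A[B/X] for a free variable X (B locally closed).\<close>
fun subst :: "nat \<Rightarrow> ty \<Rightarrow> ty \<Rightarrow> ty" where
  "subst X B (FV Y) = (if X = Y then B else FV Y)"
| "subst X B (BV i) = BV i"
| "subst X B (Arr A C) = Arr (subst X B A) (subst X B C)"
| "subst X B (Lat A) = Lat (subst X B A)"
| "subst X B (Mu A) = Mu (subst X B A)"

definition top :: ty where "top = Mu (Lat (BV 0))"

fun tail :: "ty \<Rightarrow> ty" where
  "tail (FV X) = FV X"
| "tail (BV i) = BV i"
| "tail (Arr A B) = tail B"
| "tail (Lat A) = Lat (tail A)"
| "tail (Mu A) = Mu (tail A)"

text \<open>topv ms T: ms has one entry per enclosing mu (innermost first), counting the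
bullets occurring after that mu. The final variable must be bound by one of the
mus of the tail (de Bruijn: this is the innermost mu binding that name), with at
least one bullet after that binder.\<close>
fun topv :: "nat list \<Rightarrow> ty \<Rightarrow> bool" where
  "topv ms (FV X) = False"
| "topv ms (BV i) = (i < length ms \<and> ms ! i \<ge> 1)"
| "topv ms (Arr A B) = topv ms B"
| "topv ms (Lat A) = topv (map Suc ms) A"
| "topv ms (Mu A) = topv (0 # ms) A"

definition topvariant :: "ty \<Rightarrow> bool" where
  "topvariant A = topv [] (tail A)"

fun proper :: "nat \<Rightarrow> ty \<Rightarrow> bool" where
  "proper X (FV Y) = (Y \<noteq> X)"
| "proper X (BV i) = True"
| "proper X (Lat A) = True"
| "proper X (Arr A B) = ((proper X A \<and> proper X B) \<or> topvariant B)"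
| "proper X (Mu A) = (proper X A \<or> topvariant (Mu A))"

inductive is_type :: "ty \<Rightarrow> bool" where
  t_var: "is_type (FV X)"
| t_arr: "is_type A \<Longrightarrow> is_type B \<Longrightarrow> is_type (Arr A B)"
| t_lat: "is_type A \<Longrightarrow> is_type (Lat A)"
| t_mu: "X \<notin> fvs A \<Longrightarrow> is_type (opn 0 (FV X) A) \<Longrightarrow> proper X (opn 0 (FV X) A)
          \<Longrightarrow> is_type (Mu A)"

section \<open>Equality: eqv False is \<cong>, eqv True is \<simeq>\<close>

inductive eqv :: "bool \<Rightarrow> ty \<Rightarrow> ty \<Rightarrow> bool" where
  e_refl: "is_type A \<Longrightarrow> eqv b A A"
| e_sym: "eqv b A B \<Longrightarrow> eqv b B A"
| e_trans: "eqv b A B \<Longrightarrow> eqv b B C \<Longrightarrow> eqv b A C"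
| e_lat: "eqv b A B \<Longrightarrow> eqv b (Lat A) (Lat B)"
| e_arr: "eqv b A C \<Longrightarrow> eqv b B D \<Longrightarrow> eqv b (Arr A B) (Arr C D)"
| e_top: "is_type A \<Longrightarrow> eqv b (Arr A top) top"
| e_unf: "is_type (Mu A) \<Longrightarrow> eqv b (Mu A) (opn 0 (Mu A) A)"
| e_fix: "is_type A \<Longrightarrow> is_type (Mu C) \<Longrightarrow> eqv b A (opn 0 A C) \<Longrightarrow> eqv b A (Mu C)"
| e_dist: "is_type A \<Longrightarrow> is_type B \<Longrightarrow> eqv True (Lat (Arr A B)) (Arr (Lat A) (Lat B))"

abbreviation cong_ty :: "ty \<Rightarrow> ty \<Rightarrow> bool" where "cong_ty \<equiv> eqv False"
abbreviation sim_ty :: "ty \<Rightarrow> ty \<Rightarrow> bool" where "sim_ty \<equiv> eqv True"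

definition ftv :: "(nat \<times> nat) set \<Rightarrow> nat set" where
  "ftv g = fst ` g \<union> snd ` g"

definition wfa :: "(nat \<times> nat) set \<Rightarrow> bool" where
  "wfa g \<longleftrightarrow> finite g \<and> (\<forall>(X,Y)\<in>g. X \<noteq> Y) \<and>
     (\<forall>(X,Y)\<in>g. \<forall>(X',Y')\<in>g. (X,Y) \<noteq> (X',Y') \<longrightarrow> {X,Y} \<inter> {X',Y'} = {})"

inductive sub :: "(nat \<times> nat) set \<Rightarrow> ty \<Rightarrow> ty \<Rightarrow> bool" where
  s_ass: "wfa (insert (X,Y) g) \<Longrightarrow> sub (insert (X,Y) g) (FV X) (FV Y)"
| s_top: "wfa g \<Longrightarrow> is_type A \<Longrightarrow> sub g A top"
| s_eq: "wfa g \<Longrightarrow> sim_ty A B \<Longrightarrow> sub g A B"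
| s_trans: "sub g1 A B \<Longrightarrow> sub g2 B C \<Longrightarrow> wfa (g1 \<union> g2) \<Longrightarrow> sub (g1 \<union> g2) A C"
| s_lat: "sub g A B \<Longrightarrow> sub g (Lat A) (Lat B)"
| s_arr: "sub g1 A' A \<Longrightarrow> sub g2 B B' \<Longrightarrow> wfa (g1 \<union> g2) \<Longrightarrow>
          sub (g1 \<union> g2) (Arr A B) (Arr A' B')"
| s_mu: "sub (insert (X,Y) g) (opn 0 (FV X) A) (opn 0 (FV Y) B) \<Longrightarrow> wfa (insert (X,Y) g) \<Longrightarrow>
          X \<notin> fvs A \<Longrightarrow> Y \<notin> fvs B \<Longrightarrow>
          X \<notin> ftv g \<union> fvs (opn 0 (FV Y) B) \<Longrightarrow> Y \<notin> ftv g \<union> fvs (opn 0 (FV X) A) \<Longrightarrow>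
          proper X (opn 0 (FV X) A) \<Longrightarrow> proper Y (opn 0 (FV Y) B) \<Longrightarrow>
          sub g (Mu A) (Mu B)"
| s_later: "wfa g \<Longrightarrow> is_type A \<Longrightarrow> sub g A (Lat A)"

datatype lterm = LVar nat | LApp lterm lterm | LAbs lterm

fun lift :: "lterm \<Rightarrow> nat \<Rightarrow> lterm" where
  "lift (LVar i) k = (if i < k then LVar i else LVar (Suc i))"
| "lift (LApp s t) k = LApp (lift s k) (lift t k)"
| "lift (LAbs s) k = LAbs (lift s (Suc k))"

fun lsubst :: "lterm \<Rightarrow> lterm \<Rightarrow> nat \<Rightarrow> lterm" where
  "lsubst (LVar i) s k = (if k < i then LVar (i - 1) else if i = k then s else LVar i)"
| "lsubst (LApp t u) s k = LApp (lsubst t s k) (lsubst u s k)"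
| "lsubst (LAbs t) s k = LAbs (lsubst t (lift s 0) (Suc k))"

inductive beta :: "lterm \<Rightarrow> lterm \<Rightarrow> bool" where
  b_beta: "beta (LApp (LAbs s) t) (lsubst s t 0)"
| b_appL: "beta s t \<Longrightarrow> beta (LApp s u) (LApp t u)"
| b_appR: "beta s t \<Longrightarrow> beta (LApp u s) (LApp u t)"
| b_abs: "beta s t \<Longrightarrow> beta (LAbs s) (LAbs t)"

fun lfv :: "lterm \<Rightarrow> nat set" where
  "lfv (LVar i) = {i}"
| "lfv (LApp s t) = lfv s \<union> lfv t"
| "lfv (LAbs s) = {i. Suc i \<in> lfv s}"

definition scons :: "'v \<Rightarrow> (nat \<Rightarrow> 'v) \<Rightarrow> nat \<Rightarrow> 'v" where
  "scons v \<rho> n = (case n of 0 \<Rightarrow> v | Suc m \<Rightarrow> \<rho> m)"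

definition syn_lambda_algebra :: "('v \<Rightarrow> 'v \<Rightarrow> 'v) \<Rightarrow> (lterm \<Rightarrow> (nat \<Rightarrow> 'v) \<Rightarrow> 'v) \<Rightarrow> bool" where
  "syn_lambda_algebra app sem \<longleftrightarrow>
     (\<forall>x \<rho>. sem (LVar x) \<rho> = \<rho> x) \<and>
     (\<forall>M N \<rho>. sem (LApp M N) \<rho> = app (sem M \<rho>) (sem N \<rho>)) \<and>
     (\<forall>M \<rho> v. app (sem (LAbs M) \<rho>) v = sem M (scons v \<rho>)) \<and>
     (\<forall>M \<rho> \<rho>'. (\<forall>x\<in>lfv M. \<rho> x = \<rho>' x) \<longrightarrow> sem M \<rho> = sem M \<rho>') \<and>
     (\<forall>M N \<rho>. equivclp beta M N \<longrightarrow> sem M \<rho> = sem N \<rho>)"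

definition well_founded_frame :: "('w \<Rightarrow> 'w \<Rightarrow> bool) \<Rightarrow> bool" where
  "well_founded_frame R \<longleftrightarrow> \<not> (\<exists>f. \<forall>i. R (f i) (f (Suc i)))"

definition locally_linear :: "('w \<Rightarrow> 'w \<Rightarrow> bool) \<Rightarrow> bool" where
  "locally_linear R \<longleftrightarrow> (\<forall>p q. R p q \<longrightarrow>
      (\<exists>r. R\<^sup>*\<^sup>* p r \<and> R r q \<and> (\<forall>s. R r s \<longrightarrow> R\<^sup>*\<^sup>* q s)))"

definition lamA_frame :: "('w \<Rightarrow> 'w \<Rightarrow> bool) \<Rightarrow> bool" where
  "lamA_frame R \<longleftrightarrow> well_founded_frame R \<and> locally_linear R"

definition hereditary :: "('w \<Rightarrow> 'w \<Rightarrow> bool) \<Rightarrow> (nat \<Rightarrow> 'w \<Rightarrow> 'v set) \<Rightarrow> bool" where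
  "hereditary R \<eta> \<longleftrightarrow> (\<forall>X p q. R p q \<longrightarrow> \<eta> X p \<subseteq> \<eta> X q)"

text \<open>Syntactic rank used for the well-founded recursion (top-variants have rank 0,
everything below a bullet is ignored).\<close>
fun rank0 :: "ty \<Rightarrow> nat" where
  "rank0 (FV X) = 0"
| "rank0 (BV i) = 0"
| "rank0 (Lat A) = 0"
| "rank0 (Arr A B) = (if topvariant (Arr A B) then 0
                       else Suc (max (rank0 A) (rank0 B)))"
| "rank0 (Mu A) = (if topvariant (Mu A) then 0 else Suc (rank0 A))"

lemma topv_tail: "topv ms (tail T) = topv ms T"
  by (induction T arbitrary: ms) auto

lemma topv_opn: "length ms \<le> j \<Longrightarrow> topv ms T \<Longrightarrow> topv ms (opn j u T)"
  by (induction T arbitrary: ms j) auto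

lemma topv_opn_FV: "length ms \<le> j \<Longrightarrow> topv ms (opn j (FV X) T) \<Longrightarrow> topv ms T"
proof (induction T arbitrary: ms j)
  case (Mu T)
  then show ?case using Mu.IH[of "0 # ms" "Suc j"] by simp
qed (auto split: if_splits)

lemma rank0_tv: "topvariant T \<Longrightarrow> rank0 T = 0"
  by (cases T) auto

lemma tv_opn: "topvariant T \<Longrightarrow> topvariant (opn k u T)"
  using topv_opn[of "[]" k T u] by (simp add: topvariant_def topv_tail)

lemma tv_opn_FV: "topvariant (opn k (FV X) T) \<Longrightarrow> topvariant T"
  using topv_opn_FV[of "[]" k X T] by (simp add: topvariant_def topv_tail)

lemma tv_simps[simp]:
  "topvariant (Arr A B) = topvariant B"
  "\<not> topvariant (FV X)"
  "topvariant (BV i) = False"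
  by (simp_all add: topvariant_def)

lemma rank_opn: "proper X (opn k (FV X) T) \<Longrightarrow> rank0 (opn k u T) \<le> rank0 T"
proof (induction T arbitrary: k)
  case (Arr A B)
  show ?case
  proof (cases "topvariant (opn k u (Arr A B))")
    case True then show ?thesis by (simp only: rank0_tv)
  next
    case False
    have nt: "\<not> topvariant (Arr A B)" using False tv_opn by blast
    hence "\<not> topvariant (opn k (FV X) B)" using tv_opn_FV by auto
    then have "proper X (opn k (FV X) A)" "proper X (opn k (FV X) B)" using Arr.prems by auto
    then have "rank0 (opn k u A) \<le> rank0 A" "rank0 (opn k u B) \<le> rank0 B" using Arr.IH by auto
    then show ?thesis using False nt by (auto simp del: tv_simps)
  qed
next
  case (Mu A)
  show ?case
  proof (cases "topvariant (opn k u (Mu A))")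
    case True then show ?thesis by (simp only: rank0_tv)
  next
    case False
    have nt: "\<not> topvariant (Mu A)" using False tv_opn by blast
    hence "\<not> topvariant (opn k (FV X) (Mu A))" using tv_opn_FV by blast
    then show ?thesis using Mu False nt by auto
  qed
qed (auto)

locale wf_frame =
  fixes R :: "'w \<Rightarrow> 'w \<Rightarrow> bool"
  assumes no_chain: "well_founded_frame R"
begin

function interp :: "('v \<Rightarrow> 'v \<Rightarrow> 'v) \<Rightarrow> (nat \<Rightarrow> 'w \<Rightarrow> 'v set) \<Rightarrow> ty \<Rightarrow> 'w \<Rightarrow> 'v set" where
  "interp app \<eta> (FV X) p = \<eta> X p"
| "interp app \<eta> (BV i) p = {}"
| "interp app \<eta> (Lat A) p =
     (if topvariant (Lat A) then UNIV
      else {u. \<forall>q\<in>{q. R p q}. u \<in> interp app \<eta> A q})"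
| "interp app \<eta> (Arr A B) p =
     (if topvariant (Arr A B) then UNIV
      else {u. \<forall>q\<in>{q. R\<^sup>*\<^sup>* p q}. \<forall>v. v \<in> interp app \<eta> A q \<longrightarrow> app u v \<in> interp app \<eta> B q})"
| "interp app \<eta> (Mu A) p =
     (if topvariant (Mu A) then UNIV
      else if (\<exists>X. proper X (opn 0 (FV X) A)) then interp app \<eta> (opn 0 (Mu A) A) p
      else {})"
  by pat_completeness auto

termination
proof (relation "inv_image ({(q,p). R p q}\<^sup>+ <*lex*> measure rank0) (\<lambda>(a,e,A,p). (p,A))")
  have "wf {(q,p). R p q}"
    using no_chain unfolding well_founded_frame_def wf_iff_no_infinite_down_chain by auto
  then show "wf (inv_image ({(q,p). R p q}\<^sup>+ <*lex*> measure rank0) (\<lambda>(a,e,A,p). (p,A)))"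
    by (intro wf_inv_image wf_lex_prod wf_trancl) auto
next
  fix app :: "'v \<Rightarrow> 'v \<Rightarrow> 'v" and \<eta> A p q
  assume "q \<in> {q. R p q}"
  then show "((app, \<eta>, A, q), app, \<eta>, Lat A, p)
     \<in> inv_image ({(q,p). R p q}\<^sup>+ <*lex*> measure rank0) (\<lambda>(a,e,A,p). (p,A))" by auto
next
  have tr: "(q,p) \<in> {(q,p). R p q}\<^sup>+" if "R\<^sup>+\<^sup>+ p q" for p q
    using that by (induction rule: tranclp_induct) (auto intro: trancl_into_trancl2)
  fix app :: "'v \<Rightarrow> 'v \<Rightarrow> 'v" and \<eta> A B p q
  assume a: "\<not> topvariant (Arr A B)" "q \<in> {q. R\<^sup>*\<^sup>* p q}"
  then have "p = q \<or> R\<^sup>+\<^sup>+ p q" by (auto dest: rtranclpD)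
  then show "((app, \<eta>, A, q), app, \<eta>, Arr A B, p)
     \<in> inv_image ({(q,p). R p q}\<^sup>+ <*lex*> measure rank0) (\<lambda>(a,e,A,p). (p,A))"
   and "((app, \<eta>, B, q), app, \<eta>, Arr A B, p)
     \<in> inv_image ({(q,p). R p q}\<^sup>+ <*lex*> measure rank0) (\<lambda>(a,e,A,p). (p,A))"
    using a tr by auto
next
  fix app :: "'v \<Rightarrow> 'v \<Rightarrow> 'v" and \<eta> A p
  assume a: "\<not> topvariant (Mu A)" "\<exists>X. proper X (opn 0 (FV X) A)"
  then obtain X where "proper X (opn 0 (FV X) A)" by blast
  then have "rank0 (opn 0 (Mu A) A) \<le> rank0 A" by (rule rank_opn)
  then show "((app, \<eta>, opn 0 (Mu A) A, p), app, \<eta>, Mu A, p)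
     \<in> inv_image ({(q,p). R p q}\<^sup>+ <*lex*> measure rank0) (\<lambda>(a,e,A,p). (p,A))"
    using a by auto
qed

end

end

theory Submission
  imports Defs
begin

text \<open>The interpretation of a
type is hereditary along the frame, commutes with substitution, and at a world p depends on a
variable in which the type is proper only through the variable's values at worlds strictly
after p. Both fixed-point rules (unique solutions for equality, and the \<mu>-rule of subtyping)
therefore follow by well-founded induction on worlds: at p both sides are unfolded once, and
the recursive occurrences are only inspected at later worlds, where the induction hypothesis
applies. Local linearity of the frame is exactly what makes \<bullet>(A \<rightarrow> B) and \<bullet>A \<rightarrow> \<bullet>B denote
the same set.\<close>

fun lc_at :: "nat \<Rightarrow> ty \<Rightarrow> bool" where
  "lc_at k (FV X) = True"
| "lc_at k (BV i) = (i < k)"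
| "lc_at k (Arr A B) = (lc_at k A \<and> lc_at k B)"
| "lc_at k (Lat A) = lc_at k A"
| "lc_at k (Mu A) = lc_at (Suc k) A"

lemma lc_at_mono: "lc_at k D \<Longrightarrow> k \<le> j \<Longrightarrow> lc_at j D"
  by (induction D arbitrary: k j) auto

lemma opn_lc_at: "lc_at k D \<Longrightarrow> opn k U D = D"
  by (induction D arbitrary: k) auto

lemma lc_at_opn: "lc_at (Suc k) E \<Longrightarrow> lc_at k U \<Longrightarrow> lc_at k (opn k U E)"
proof (induction E arbitrary: k U)
  case (Mu E) then show ?case using Mu.IH[of "Suc k" U] lc_at_mono[of k U "Suc k"] by simp
qed auto

lemma lc_at_opn_FV_D: "lc_at k (opn k (FV X) A) \<Longrightarrow> lc_at (Suc k) A"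
  by (induction A arbitrary: k) (auto split: if_splits)

lemma lc_at_subst: "lc_at k D \<Longrightarrow> lc_at 0 T \<Longrightarrow> lc_at k (subst X T D)"
  by (induction D arbitrary: k) (auto intro: lc_at_mono)

lemma subst_fresh: "X \<notin> fvs D \<Longrightarrow> subst X T D = D"
  by (induction D) auto

lemma subst_opn: "lc_at 0 T \<Longrightarrow> subst X T (opn k U D) = opn k (subst X T U) (subst X T D)"
  by (induction D arbitrary: k) (auto simp: opn_lc_at lc_at_mono)

lemma opn_eq_subst_opn_FV: "X \<notin> fvs C \<Longrightarrow> lc_at 0 T \<Longrightarrow> opn k T C = subst X T (opn k (FV X) C)"
  by (simp add: subst_opn subst_fresh)

lemma finite_fvs: "finite (fvs D)"
  by (induction D) auto

lemma fvs_opn: "fvs (opn k U D) \<subseteq> fvs U \<union> fvs D"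
  by (induction D arbitrary: k) auto

lemma fvs_subset_opn: "fvs D \<subseteq> fvs (opn k U D)"
  by (induction D arbitrary: k) auto

lemma topvariant_eq_topv: "topvariant A = topv [] A"
  by (simp add: topvariant_def topv_tail)

lemma topvariant_Lat [simp]: "topvariant (Lat A) = topvariant A"
  by (simp add: topvariant_def)

lemma topvariant_opn_FV_iff: "topvariant (opn k (FV X) T) = topvariant T"
  using tv_opn tv_opn_FV by blast

lemma topvariant_top: "topvariant top"
  by (simp add: top_def topvariant_eq_topv)

lemma topv_subst: "topv ms D \<Longrightarrow> topv ms (subst X T D)"
  by (induction D arbitrary: ms) auto

lemma topvariant_subst: "topvariant D \<Longrightarrow> topvariant (subst X T D)"
  by (simp add: topvariant_eq_topv topv_subst)

lemma topv_append_lc_at: "lc_at (length ms) U \<Longrightarrow> topv (ms @ xs) U = topv ms U"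
proof (induction U arbitrary: ms xs)
  case (Mu U) then show ?case using Mu.IH[of "0 # ms" xs] by simp
qed (auto simp: nth_append)

lemma topv_opn_lc_at:
  "lc_at 0 U \<Longrightarrow> topv [] U \<Longrightarrow> length ms = k \<Longrightarrow> topv (ms @ [m]) D \<Longrightarrow> topv ms (opn k U D)"
proof (induction D arbitrary: ms k m)
  case (BV i)
  then show ?case using topv_append_lc_at[of "[]" U ms] by (auto simp: nth_append split: if_splits)
next
  case (Lat A) then show ?case using Lat.IH[of "map Suc ms" k "Suc m"] by simp
next
  case (Mu A) then show ?case using Mu.IH[of "0 # ms" "Suc k" m] by simp
qed auto

lemma topvariant_unfold: "lc_at 0 (Mu E) \<Longrightarrow> topvariant (Mu E) \<Longrightarrow> topvariant (opn 0 (Mu E) E)"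
  using topv_opn_lc_at[of "Mu E" "[]" 0 0 E] by (simp add: topvariant_eq_topv)

fun proper_bv :: "nat \<Rightarrow> ty \<Rightarrow> bool" where
  "proper_bv k (FV X) = True"
| "proper_bv k (BV i) = (i \<noteq> k)"
| "proper_bv k (Lat A) = True"
| "proper_bv k (Arr A B) = ((proper_bv k A \<and> proper_bv k B) \<or> topvariant B)"
| "proper_bv k (Mu A) = (proper_bv (Suc k) A \<or> topvariant (Mu A))"

fun mu_proper :: "ty \<Rightarrow> bool" where
  "mu_proper (FV X) = True"
| "mu_proper (BV i) = True"
| "mu_proper (Arr A B) = (mu_proper A \<and> mu_proper B)"
| "mu_proper (Lat A) = mu_proper A"
| "mu_proper (Mu A) = (proper_bv 0 A \<and> mu_proper A)"

lemma proper_opn_FV_iff: "proper Z (opn k (FV Z) D) = (proper_bv k D \<and> proper Z D)"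
proof (induction D arbitrary: k)
  case (Arr A B) then show ?case using topvariant_opn_FV_iff by auto
next
  case (Mu E)
  have "topvariant (Mu (opn (Suc k) (FV Z) E)) = topvariant (Mu E)"
    using topvariant_opn_FV_iff[of k Z "Mu E"] by simp
  then show ?case using Mu by auto
qed auto

lemma proper_if_fresh: "Z \<notin> fvs D \<Longrightarrow> proper Z D"
  by (induction D) auto

lemma ex_fresh_proper_opn:
  assumes "proper_bv 0 A"
  obtains Z where "Z \<notin> fvs A" "proper Z (opn 0 (FV Z) A)"
proof -
  obtain Z where "Z \<notin> fvs A"
    using finite_fvs ex_new_if_finite infinite_UNIV_nat by blast
  then show ?thesis using that assms proper_opn_FV_iff proper_if_fresh by blast
qed

lemma ex_proper_opn_iff: "(\<exists>Z. proper Z (opn 0 (FV Z) A)) = proper_bv 0 A"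
  using proper_opn_FV_iff ex_fresh_proper_opn by metis

lemma proper_opn: "proper X D \<Longrightarrow> proper X U \<Longrightarrow> proper X (opn k U D)"
proof (induction D arbitrary: k)
  case (Mu E) then show ?case using tv_opn[of "Mu E" k U] by auto
qed (auto intro: tv_opn)

lemma proper_bv_lc_at: "lc_at j T \<Longrightarrow> j \<le> k \<Longrightarrow> proper_bv k T"
  by (induction T arbitrary: j k) auto

lemma proper_bv_subst: "proper_bv k D \<Longrightarrow> lc_at 0 T \<Longrightarrow> proper_bv k (subst X T D)"
proof (induction D arbitrary: k)
  case (Mu E) then show ?case using topvariant_subst[of "Mu E" X T] by auto
qed (auto intro: proper_bv_lc_at topvariant_subst)

lemma proper_bv_opn: "proper_bv j D \<Longrightarrow> j \<noteq> k \<Longrightarrow> lc_at 0 U \<Longrightarrow> proper_bv j (opn k U D)"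
proof (induction D arbitrary: j k)
  case (Mu E) then show ?case using tv_opn[of "Mu E" k U] by auto
qed (auto intro: proper_bv_lc_at tv_opn)

lemma proper_bv_opn_FV_D: "proper_bv j (opn k (FV X) D) \<Longrightarrow> j \<noteq> k \<Longrightarrow> proper_bv j D"
proof (induction D arbitrary: j k)
  case (Mu E) then show ?case using topvariant_opn_FV_iff[of k X "Mu E"] by auto
qed (auto simp: topvariant_opn_FV_iff split: if_splits)

lemma mu_proper_opn: "mu_proper D \<Longrightarrow> mu_proper U \<Longrightarrow> lc_at 0 U \<Longrightarrow> mu_proper (opn k U D)"
  by (induction D arbitrary: k) (auto intro: proper_bv_opn)

lemma mu_proper_opn_FV_D: "mu_proper (opn k (FV X) D) \<Longrightarrow> mu_proper D"
  by (induction D arbitrary: k) (auto intro: proper_bv_opn_FV_D split: if_splits)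

lemma mu_proper_subst: "mu_proper D \<Longrightarrow> mu_proper T \<Longrightarrow> lc_at 0 T \<Longrightarrow> mu_proper (subst X T D)"
  by (induction D) (auto intro: proper_bv_subst)

text \<open>The invariant of type expressions the semantics relies on; unlike \<open>is_type\<close>, it is
structurally preserved by unfolding and substitution.\<close>
definition wf_ty :: "ty \<Rightarrow> bool" where
  "wf_ty D \<longleftrightarrow> lc_at 0 D \<and> mu_proper D"

lemma wf_ty_Arr [simp]: "wf_ty (Arr A B) \<longleftrightarrow> wf_ty A \<and> wf_ty B"
  and wf_ty_Lat [simp]: "wf_ty (Lat A) \<longleftrightarrow> wf_ty A"
  and wf_ty_FV [simp]: "wf_ty (FV X)"
  by (auto simp: wf_ty_def)

lemma wf_ty_MuI: "wf_ty (opn 0 (FV X) A) \<Longrightarrow> proper X (opn 0 (FV X) A) \<Longrightarrow> wf_ty (Mu A)"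
  unfolding wf_ty_def
  using lc_at_opn_FV_D[of 0 X A] mu_proper_opn_FV_D[of 0 X A] proper_opn_FV_iff[of X 0 A] by simp

lemma wf_ty_unfold: "wf_ty (Mu A) \<Longrightarrow> wf_ty (opn 0 (Mu A) A)"
  unfolding wf_ty_def using lc_at_opn[of 0 A "Mu A"] mu_proper_opn[of A "Mu A" 0] by simp

lemma wf_ty_opn_FV: "wf_ty (Mu A) \<Longrightarrow> wf_ty (opn 0 (FV X) A)"
  unfolding wf_ty_def using lc_at_opn[of 0 A "FV X"] mu_proper_opn[of A "FV X" 0] by simp

lemma wf_ty_subst: "wf_ty D \<Longrightarrow> wf_ty T \<Longrightarrow> wf_ty (subst X T D)"
  unfolding wf_ty_def using lc_at_subst mu_proper_subst by blast

lemma wf_ty_top: "wf_ty top"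
  by (simp add: wf_ty_def top_def)

lemma is_type_wf_ty: "is_type A \<Longrightarrow> wf_ty A"
  by (induction rule: is_type.induct) (auto intro: wf_ty_MuI)

lemma eqv_wf_ty: "eqv b A B \<Longrightarrow> wf_ty A \<and> wf_ty B"
  by (induction rule: eqv.induct) (auto intro: wf_ty_top wf_ty_unfold is_type_wf_ty)

lemma sub_wf_ty: "sub g A B \<Longrightarrow> wf_ty A \<and> wf_ty B"
  by (induction rule: sub.induct) (auto intro: wf_ty_top wf_ty_MuI is_type_wf_ty dest: eqv_wf_ty)

subsection \<open>The interpretation\<close>

context wf_frame
begin

lemma world_induct [case_names less]:
  assumes "\<And>p. (\<And>q. R\<^sup>+\<^sup>+ p q \<Longrightarrow> P q) \<Longrightarrow> P p"
  shows "P p"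
proof -
  have "wfp R\<inverse>\<inverse>"
    using no_chain unfolding well_founded_frame_def wfp_def wf_iff_no_infinite_down_chain by simp
  then have "wfp (R\<^sup>+\<^sup>+)\<inverse>\<inverse>"
    using wfp_tranclp tranclp_converse by metis
  then show ?thesis
    by (rule wfp_induct) (use assms in auto)
qed

lemma interp_topvariant: "topvariant T \<Longrightarrow> interp app \<eta> T p = UNIV"
  by (cases T) auto

lemma interp_Lat: "interp app \<eta> (Lat A) p = {u. \<forall>q. R p q \<longrightarrow> u \<in> interp app \<eta> A q}"
proof (cases "topvariant (Lat A)")
  case True
  then show ?thesis by (simp add: interp_topvariant)
qed auto

lemma interp_Arr: "interp app \<eta> (Arr A B) p =
   {u. \<forall>q. R\<^sup>*\<^sup>* p q \<longrightarrow> (\<forall>v \<in> interp app \<eta> A q. app u v \<in> interp app \<eta> B q)}"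
proof (cases "topvariant (Arr A B)")
  case True
  then have "topvariant B" by simp
  then show ?thesis using True by (simp add: interp_topvariant del: tv_simps)
qed auto

lemma interp_unfold:
  assumes "wf_ty (Mu A)"
  shows "interp app \<eta> (Mu A) p = interp app \<eta> (opn 0 (Mu A) A) p"
proof (cases "topvariant (Mu A)")
  case True
  then have "topvariant (opn 0 (Mu A) A)"
    using assms by (intro topvariant_unfold) (simp_all add: wf_ty_def)
  then show ?thesis using True by (simp only: interp_topvariant)
next
  case False
  then show ?thesis using assms by (simp add: wf_ty_def ex_proper_opn_iff)
qed

lemma interp_hereditary:
  "hereditary R \<eta> \<Longrightarrow> R p q \<Longrightarrow> interp app \<eta> T p \<subseteq> interp app \<eta> T q"
proof (induction app \<eta> T p arbitrary: q rule: interp.induct)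
  case (1 app \<eta> X p)
  then show ?case unfolding hereditary_def by simp
next
  case (3 app \<eta> A p)
  show ?case
  proof (cases "topvariant (Lat A)")
    case False
    then show ?thesis using 3 by (auto simp: interp_Lat)
  qed (simp only: interp_topvariant)
next
  case (4 app \<eta> A B p)
  then have "R p q" by simp
  then show ?case unfolding interp_Arr using converse_rtranclp_into_rtranclp[of R p q] by blast
next
  case (5 app \<eta> A p)
  then show ?case by (cases "topvariant (Mu A)") (auto simp: interp_topvariant)
qed auto

lemma interp_hereditary_rtranclp:
  assumes "hereditary R \<eta>"
  shows "R\<^sup>*\<^sup>* p q \<Longrightarrow> interp app \<eta> T p \<subseteq> interp app \<eta> T q"
  by (induction rule: rtranclp_induct) (use interp_hereditary[OF assms] in blast)+

lemma interp_cong: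
  "(\<forall>Y\<in>fvs D. \<forall>s. R\<^sup>*\<^sup>* p s \<longrightarrow> \<eta>1 Y s = \<eta>2 Y s) \<Longrightarrow> interp app \<eta>1 D p = interp app \<eta>2 D p"
proof (induction app \<eta>1 D p rule: interp.induct)
  case (3 app \<eta> A p)
  have "interp app \<eta> A q = interp app \<eta>2 A q" if "R p q" for q
    using 3 that by (cases "topvariant A")
      (auto simp: interp_topvariant intro: converse_rtranclp_into_rtranclp)
  then show ?case by (simp add: interp_Lat del: interp.simps)
next
  case (4 app \<eta> A B p)
  show ?case
  proof (cases "topvariant (Arr A B)")
    case False
    have later: "\<forall>Y\<in>fvs A \<union> fvs B. \<forall>s. R\<^sup>*\<^sup>* q s \<longrightarrow> \<eta> Y s = \<eta>2 Y s" if "R\<^sup>*\<^sup>* p q" for q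
      using 4(3) that by (auto intro: rtranclp_trans)
    have "interp app \<eta> A q = interp app \<eta>2 A q" if "R\<^sup>*\<^sup>* p q" for q
      using 4(1) False later that by simp
    moreover have "interp app \<eta> B q = interp app \<eta>2 B q"
      if "R\<^sup>*\<^sup>* p q" and "v \<in> interp app \<eta> A q" for q v
      using 4(2) False later that by simp
    ultimately show ?thesis unfolding interp_Arr by blast
  qed (simp only: interp_topvariant)
next
  case (5 app \<eta> A p)
  then show ?case using fvs_opn[of 0 "Mu A" A] by auto
qed auto

text \<open>Contractiveness: a type proper in X looks at X only at strictly later worlds.\<close>
lemma interp_cong_proper:
  "proper X D \<Longrightarrow> (\<forall>Y\<in>fvs D. Y \<noteq> X \<longrightarrow> (\<forall>s. R\<^sup>*\<^sup>* p s \<longrightarrow> \<eta>1 Y s = \<eta>2 Y s)) \<Longrightarrow>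
   (\<forall>s. R\<^sup>+\<^sup>+ p s \<longrightarrow> \<eta>1 X s = \<eta>2 X s) \<Longrightarrow> interp app \<eta>1 D p = interp app \<eta>2 D p"
proof (induction app \<eta>1 D p rule: interp.induct)
  case (3 app \<eta> A p)
  have "interp app \<eta> A q = interp app \<eta>2 A q" if "R p q" for q
  proof (rule interp_cong, intro ballI allI impI)
    fix Y s assume "Y \<in> fvs A" "R\<^sup>*\<^sup>* q s"
    then have "R\<^sup>+\<^sup>+ p s" "R\<^sup>*\<^sup>* p s"
      using \<open>R p q\<close> by (auto intro: rtranclp_into_tranclp2 converse_rtranclp_into_rtranclp)
    then show "\<eta> Y s = \<eta>2 Y s" using 3 \<open>Y \<in> fvs A\<close> by (cases "Y = X") auto
  qed
  then show ?case by (simp add: interp_Lat del: interp.simps)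
next
  case (4 app \<eta> A B p)
  show ?case
  proof (cases "topvariant (Arr A B)")
    case False
    then have pr: "proper X A" "proper X B" using 4 by auto
    have later: "(\<forall>s. R\<^sup>*\<^sup>* q s \<longrightarrow> R\<^sup>*\<^sup>* p s) \<and> (\<forall>s. R\<^sup>+\<^sup>+ q s \<longrightarrow> R\<^sup>+\<^sup>+ p s)"
      if "R\<^sup>*\<^sup>* p q" for q
      using that by (auto intro: rtranclp_trans rtranclp_tranclp_tranclp)
    have "interp app \<eta> A q = interp app \<eta>2 A q" if q: "R\<^sup>*\<^sup>* p q" for q
      using 4(1)[OF False, simplified, OF q pr(1)] later[OF q] 4(4,5) by auto
    moreover have "interp app \<eta> B q = interp app \<eta>2 B q"
      if q: "R\<^sup>*\<^sup>* p q" and v: "v \<in> interp app \<eta> A q" for q v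
      using 4(2)[OF False, simplified, OF q v pr(2)] later[OF q] 4(4,5) by auto
    ultimately show ?thesis unfolding interp_Arr by blast
  qed (simp only: interp_topvariant)
next
  case (5 app \<eta> A p)
  show ?case
  proof (cases "topvariant (Mu A)")
    case False
    show ?thesis
    proof (cases "\<exists>X. proper X (opn 0 (FV X) A)")
      case True
      have "proper X A" using 5(2) False by simp
      then have "proper X (opn 0 (Mu A) A)" using 5(2) proper_opn by blast
      then show ?thesis using 5 False True fvs_opn[of 0 "Mu A" A] by auto
    qed (use False in simp)
  qed (simp only: interp_topvariant)
qed auto

lemma interp_subst:
  assumes "wf_ty D" "wf_ty T"
  shows "interp app \<eta> (subst X T D) p = interp app (\<eta>(X := interp app \<eta> T)) D p"
proof -
  have "interp app \<eta> (subst X T D) p = interp app \<eta>' D p"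
    if "\<eta>' = \<eta>(X := interp app \<eta> T)" "wf_ty D" for \<eta>' D
    using that
  proof (induction app \<eta>' D p rule: interp.induct)
    case (2 app \<eta>' i p)
    then show ?case by (simp add: wf_ty_def)
  next
    case (3 app \<eta>' A p)
    then show ?case
      by (cases "topvariant A") (simp_all add: interp_topvariant topvariant_subst interp_Lat del: interp.simps)
  next
    case (4 app \<eta>' A B p)
    then show ?case
      by (cases "topvariant B") (simp_all add: interp_topvariant topvariant_subst interp_Arr del: interp.simps)
  next
    case (5 app \<eta>' E p)
    show ?case
    proof (cases "topvariant (Mu E)")
      case True
      then show ?thesis
        using topvariant_subst[OF True] by (simp only: interp_topvariant subst.simps)
    next
      case False
      have wf: "wf_ty (Mu E)" "wf_ty (Mu (subst X T E))"
        using 5(3) wf_ty_subst[OF 5(3) assms(2)] by simp_all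
      then have "\<exists>X. proper X (opn 0 (FV X) E)"
        by (simp add: wf_ty_def ex_proper_opn_iff)
      then have "interp app \<eta> (subst X T (opn 0 (Mu E) E)) p = interp app \<eta>' (opn 0 (Mu E) E) p"
        using 5 False wf_ty_unfold[OF wf(1)] by simp
      moreover have "subst X T (opn 0 (Mu E) E) = opn 0 (Mu (subst X T E)) (subst X T E)"
        using assms(2) by (simp add: wf_ty_def subst_opn)
      ultimately show ?thesis
        using wf by (simp only: subst.simps interp_unfold)
    qed
  qed auto
  then show ?thesis using assms(1) by blast
qed

lemma interp_Mu_eq_opn_FV:
  assumes wf: "wf_ty (Mu A)" and X: "X \<notin> fvs A" "proper X (opn 0 (FV X) A)"
    and agree: "\<forall>Z\<in>fvs A. \<forall>s. R\<^sup>*\<^sup>* p s \<longrightarrow> \<eta>' Z s = \<eta> Z s"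
    and later: "\<forall>s. R\<^sup>+\<^sup>+ p s \<longrightarrow> \<eta>' X s = interp app \<eta> (Mu A) s"
  shows "interp app \<eta> (Mu A) p = interp app \<eta>' (opn 0 (FV X) A) p"
proof -
  have "interp app \<eta> (Mu A) p = interp app \<eta> (opn 0 (Mu A) A) p"
    by (rule interp_unfold[OF wf])
  also have "\<dots> = interp app \<eta> (subst X (Mu A) (opn 0 (FV X) A)) p"
    using wf X(1) opn_eq_subst_opn_FV[of X A "Mu A"] by (simp add: wf_ty_def)
  also have "\<dots> = interp app (\<eta>(X := interp app \<eta> (Mu A))) (opn 0 (FV X) A) p"
    by (rule interp_subst[OF wf_ty_opn_FV[OF wf] wf])
  also have "\<dots> = interp app \<eta>' (opn 0 (FV X) A) p"
    by (rule interp_cong_proper[OF X(2)]) (use agree later fvs_opn[of 0 "FV X" A] in auto)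
  finally show ?thesis .
qed

lemma interp_unique_fixpoint:
  assumes wf: "wf_ty A" "wf_ty (Mu C)"
    and fixpoint: "\<And>p. interp app \<eta> A p = interp app \<eta> (opn 0 A C) p"
  shows "interp app \<eta> A p = interp app \<eta> (Mu C) p"
proof -
  obtain Z where Z: "Z \<notin> fvs C" "proper Z (opn 0 (FV Z) C)"
    using wf(2) ex_fresh_proper_opn by (auto simp: wf_ty_def)
  show ?thesis
  proof (induction p rule: world_induct)
    case (less p)
    have "interp app \<eta> A p = interp app \<eta> (subst Z A (opn 0 (FV Z) C)) p"
      using fixpoint Z(1) wf(1) opn_eq_subst_opn_FV[of Z C A] by (simp add: wf_ty_def)
    also have "\<dots> = interp app (\<eta>(Z := interp app \<eta> A)) (opn 0 (FV Z) C) p"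
      by (rule interp_subst[OF wf_ty_opn_FV[OF wf(2)] wf(1)])
    also have "\<dots> = interp app \<eta> (Mu C) p"
      by (rule interp_Mu_eq_opn_FV[symmetric]) (use wf Z less in auto)
    finally show ?case .
  qed
qed

lemma interp_Lat_Arr:
  assumes ll: "locally_linear R" and her: "hereditary R \<eta>"
  shows "interp app \<eta> (Lat (Arr A B)) p = interp app \<eta> (Arr (Lat A) (Lat B)) p"
proof (rule set_eqI, rule iffI)
  fix u assume "u \<in> interp app \<eta> (Lat (Arr A B)) p"
  then have L: "\<And>q r v. R p q \<Longrightarrow> R\<^sup>*\<^sup>* q r \<Longrightarrow> v \<in> interp app \<eta> A r \<Longrightarrow> app u v \<in> interp app \<eta> B r"
    by (auto simp: interp_Lat interp_Arr simp del: interp.simps)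
  show "u \<in> interp app \<eta> (Arr (Lat A) (Lat B)) p"
    unfolding interp_Arr interp_Lat
  proof (intro CollectI allI impI ballI)
    fix q v s assume q: "R\<^sup>*\<^sup>* p q" and v: "v \<in> {v. \<forall>s. R q s \<longrightarrow> v \<in> interp app \<eta> A s}"
      and s: "R q s"
    have "R\<^sup>+\<^sup>+ p s" using q s by (rule rtranclp_into_tranclp1)
    then obtain q' where "R p q'" "R\<^sup>*\<^sup>* q' s" using tranclpD by metis
    then show "app u v \<in> interp app \<eta> B s" using L v s by blast
  qed
next
  fix u assume "u \<in> interp app \<eta> (Arr (Lat A) (Lat B)) p"
  then have L: "\<And>q v s. R\<^sup>*\<^sup>* p q \<Longrightarrow> (\<forall>s. R q s \<longrightarrow> v \<in> interp app \<eta> A s) \<Longrightarrow> R q s \<Longrightarrow>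
      app u v \<in> interp app \<eta> B s"
    by (auto simp: interp_Lat interp_Arr simp del: interp.simps)
  show "u \<in> interp app \<eta> (Lat (Arr A B)) p"
    unfolding interp_Arr interp_Lat
  proof (intro CollectI allI impI ballI)
    fix q r v assume q: "R p q" and r: "R\<^sup>*\<^sup>* q r" and v: "v \<in> interp app \<eta> A r"
    have "R\<^sup>+\<^sup>+ p r" using q r by (rule rtranclp_into_tranclp2)
    then obtain w where w: "R\<^sup>*\<^sup>* p w" "R w r"
      by (metis tranclp.cases tranclp_into_rtranclp rtranclp.rtrancl_refl)
    txt \<open>Local linearity yields a predecessor w' of r all of whose successors lie at or after r,
      so by heredity v is in A at every successor of w'.\<close>
    then obtain w' where w': "R\<^sup>*\<^sup>* w w'" "R w' r" "\<forall>s. R w' s \<longrightarrow> R\<^sup>*\<^sup>* r s"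
      using ll unfolding locally_linear_def by blast
    have "R\<^sup>*\<^sup>* p w'" using w w' by (meson rtranclp_trans)
    moreover have "\<forall>s. R w' s \<longrightarrow> v \<in> interp app \<eta> A s"
      using w'(3) v interp_hereditary_rtranclp[OF her] by blast
    ultimately show "app u v \<in> interp app \<eta> B r" using L w'(2) by blast
  qed
qed

end

subsection \<open>Soundness of equality and subtyping\<close>

definition models :: "(nat \<Rightarrow> 'w \<Rightarrow> 'v set) \<Rightarrow> (nat \<times> nat) set \<Rightarrow> bool" where
  "models \<eta> g \<longleftrightarrow> (\<forall>(X, Y)\<in>g. \<forall>p. \<eta> X p \<subseteq> \<eta> Y p)"

lemma modelsI: "(\<And>X Y p. (X, Y) \<in> g \<Longrightarrow> \<eta> X p \<subseteq> \<eta> Y p) \<Longrightarrow> models \<eta> g"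
  unfolding models_def by blast

lemma models_Un [simp]: "models \<eta> (g1 \<union> g2) \<longleftrightarrow> models \<eta> g1 \<and> models \<eta> g2"
  unfolding models_def by blast

context wf_frame
begin

lemma eqv_sound:
  assumes "locally_linear R" "hereditary R \<eta>"
  shows "eqv b A B \<Longrightarrow> interp app \<eta> A p = interp app \<eta> B p"
proof (induction arbitrary: p rule: eqv.induct)
  case (e_lat b A B)
  then show ?case by (simp add: interp_Lat del: interp.simps)
next
  case (e_arr b A C B D)
  then show ?case by (simp add: interp_Arr del: interp.simps)
next
  case (e_top A b)
  then show ?case by (simp add: interp_topvariant topvariant_top)
next
  case (e_unf A b)
  then show ?case by (simp add: interp_unfold is_type_wf_ty del: interp.simps)
next
  case (e_fix A C b)
  then show ?case by (intro interp_unique_fixpoint) (auto simp: is_type_wf_ty)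
next
  case (e_dist A B)
  then show ?case using interp_Lat_Arr[OF assms] by blast
qed auto

text \<open>The \<mu>-rule: at world p, X and Y are interpreted by the two recursive types cut down to
the worlds strictly after p, where the inclusion is already known; properness makes this
cut-off invisible at p itself.\<close>
lemma interp_Mu_mono:
  fixes \<eta> :: "nat \<Rightarrow> 'w \<Rightarrow> 'v set"
  assumes body: "\<And>\<eta>' p. hereditary R \<eta>' \<Longrightarrow> models \<eta>' (insert (X, Y) g) \<Longrightarrow>
      interp app \<eta>' (opn 0 (FV X) A) p \<subseteq> interp app \<eta>' (opn 0 (FV Y) B) p"
    and wf: "wf_ty (Mu A)" "wf_ty (Mu B)"
    and proper: "proper X (opn 0 (FV X) A)" "proper Y (opn 0 (FV Y) B)"
    and fresh: "X \<notin> fvs A \<union> fvs B \<union> ftv g" "Y \<notin> fvs A \<union> fvs B \<union> ftv g" "X \<noteq> Y"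
    and her: "hereditary R \<eta>" and "models \<eta> g"
  shows "interp app \<eta> (Mu A) p \<subseteq> interp app \<eta> (Mu B) p"
proof (induction p rule: world_induct)
  case (less p)
  define later :: "('w \<Rightarrow> 'v set) \<Rightarrow> 'w \<Rightarrow> 'v set"
    where "later F s = (if R\<^sup>+\<^sup>+ p s then F s else {})" for F s
  define \<eta>' where "\<eta>' = \<eta>(X := later (interp app \<eta> (Mu A)), Y := later (interp app \<eta> (Mu B)))"
  have later_hereditary: "later (interp app \<eta> T) s \<subseteq> later (interp app \<eta> T) s'" if "R s s'" for T s s'
    using that interp_hereditary[OF her that] by (auto simp: later_def intro: tranclp.trancl_into_trancl)
  have "hereditary R \<eta>'"
    using her later_hereditary fresh(3) by (auto simp: hereditary_def \<eta>'_def)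
  moreover have "models \<eta>' (insert (X, Y) g)"
  proof (rule modelsI)
    fix X' Y' s assume "(X', Y') \<in> insert (X, Y) g"
    then consider "X' = X" "Y' = Y" | "(X', Y') \<in> g" by blast
    then show "\<eta>' X' s \<subseteq> \<eta>' Y' s"
    proof cases
      case 1
      then show ?thesis using less fresh(3) by (simp add: \<eta>'_def later_def del: interp.simps)
    next
      case 2
      then have "X' \<notin> {X, Y}" "Y' \<notin> {X, Y}" using fresh unfolding ftv_def by force+
      moreover have "\<eta> X' s \<subseteq> \<eta> Y' s" using 2 \<open>models \<eta> g\<close> unfolding models_def by fast
      ultimately show ?thesis by (simp add: \<eta>'_def)
    qed
  qed
  ultimately have "interp app \<eta>' (opn 0 (FV X) A) p \<subseteq> interp app \<eta>' (opn 0 (FV Y) B) p"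
    by (rule body)
  moreover have "interp app \<eta> (Mu A) p = interp app \<eta>' (opn 0 (FV X) A) p"
    by (rule interp_Mu_eq_opn_FV) (use wf proper fresh in \<open>auto simp: \<eta>'_def later_def\<close>)
  moreover have "interp app \<eta> (Mu B) p = interp app \<eta>' (opn 0 (FV Y) B) p"
    by (rule interp_Mu_eq_opn_FV) (use wf proper fresh in \<open>auto simp: \<eta>'_def later_def\<close>)
  ultimately show ?case by simp
qed

lemma sub_sound:
  assumes "locally_linear R"
  shows "sub g A B \<Longrightarrow> hereditary R \<eta> \<Longrightarrow> models \<eta> g \<Longrightarrow> interp app \<eta> A p \<subseteq> interp app \<eta> B p"
proof (induction arbitrary: \<eta> p rule: sub.induct)
  case (s_ass X Y g)
  then show ?case by (simp add: models_def)
next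
  case (s_top g A)
  then show ?case by (simp add: interp_topvariant topvariant_top)
next
  case (s_eq g A B)
  then show ?case using eqv_sound[OF assms] by blast
next
  case (s_trans g1 A B g2 C)
  then show ?case by (meson models_Un subset_trans)
next
  case (s_lat g A B)
  then show ?case unfolding interp_Lat by blast
next
  case (s_arr g1 A' A g2 B B')
  then show ?case unfolding interp_Arr by (simp only: models_Un) blast
next
  case (s_mu X Y g A B)
  have "wf_ty (Mu A)" "wf_ty (Mu B)"
    using s_mu.hyps(1,7,8) sub_wf_ty wf_ty_MuI by blast+
  moreover have "X \<notin> fvs A \<union> fvs B \<union> ftv g" "Y \<notin> fvs A \<union> fvs B \<union> ftv g"
    using s_mu.hyps(3-6) fvs_subset_opn by blast+
  moreover have "X \<noteq> Y"
    using s_mu.hyps(2) unfolding wfa_def by blast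
  ultimately show ?case
    using interp_Mu_mono s_mu.IH s_mu.hyps(7,8) s_mu.prems by blast
next
  case (s_later g A)
  then show ?case unfolding interp_Lat using interp_hereditary by blast
qed

end

theorem theorem5:
  fixes R :: "'w \<Rightarrow> 'w \<Rightarrow> bool"
    and app :: "'v \<Rightarrow> 'v \<Rightarrow> 'v"
    and sem :: "lterm \<Rightarrow> (nat \<Rightarrow> 'v) \<Rightarrow> 'v"
    and \<eta> :: "nat \<Rightarrow> 'w \<Rightarrow> 'v set"
    and g :: "(nat \<times> nat) set"
    and A B :: ty
  assumes "syn_lambda_algebra app sem"
    and "lamA_frame R"
    and "hereditary R \<eta>"
    and "sub g A B"
    and "\<forall>(X, Y)\<in>g. \<forall>p. \<eta> X p \<subseteq> \<eta> Y p"
  shows "\<forall>p. wf_frame.interp R app \<eta> A p \<subseteq> wf_frame.interp R app \<eta> B p"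
proof -
  interpret wf_frame R
    using \<open>lamA_frame R\<close> by unfold_locales (simp add: lamA_frame_def)
  show ?thesis
    using sub_sound[of g A B \<eta>] assms(2-5) by (simp add: lamA_frame_def models_def)
qed

end
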